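(* For all integers $s\ge1$, $r\ge0$ the length-one bi-bracket $\left[\begin{matrix}s\\ r\end{matrix}\right]$ lies in $\mathcal{MD}$; more precisely, for all $k,d\ge0$, every bi-bracket $\left[\begin{matrix}s\\ r\end{matrix}\right]$ with $s\le k$, $r\le d$ (and $1\le d$, $1\le k$) lies in $\operatorname{Fil}^{W,L}_{k+d,\,d+1}(\mathcal{MD})$, i.e. in the $\mathbb{Q}$-span of $1$ and the brackets $[t_1,\dots,t_m]$ with $m\le d+1$, $m\le k+d$ and $t_1+\dots+t_m\le k+d$.
   Context: Bi-brackets: for integers $s_1,\dots,s_l\ge1$, $r_1,\dots,r_l\ge0$, \[ \left[\begin{matrix}s_1,\dots,s_l\\ r_1,\dots,r_l\end{matrix}\right]:=\sum_{\substack{u_1>\dots>u_l>0\\ v_1,\dots,v_l>0}}\prod_{j=1}^{l}\frac{u_j^{r_j}}{r_j!}\,\frac{v_j^{s_j-1}}{(s_j-1)!}\;q^{u_1v_1+\dots+u_lv_l}\in\mathbb{Q}[[q]]. \] Brackets are the bi-brackets with all $r_j=0$: $[s_1,\dots,s_l]:=\left[\begin{matrix}s_1,\dots,s_l\\ 0,\dots,0\end{matrix}\right]$; its weight is $s_1+\dots+s_l$ and its length $l$. $\mathcal{MD}$ is the $\mathbb{Q}$-vector space spanned by $1$ and all brackets $[s_1,\dots,s_l]$ ($l\ge1$, $s_j\ge1$). *)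

theory Defs
  imports Complex_Main "HOL-Computational_Algebra.Formal_Power_Series"
begin

definition bb_index :: "nat \<Rightarrow> nat \<Rightarrow> (nat list \<times> nat list) set" where
  "bb_index l n = {(us, vs). length us = l \<and> length vs = l \<and>
      sorted_wrt (>) us \<and> (\<forall>u\<in>set us. 0 < u) \<and> (\<forall>v\<in>set vs. 0 < v) \<and>
      (\<Sum>j<l. us ! j * vs ! j) = n}"

text \<open>Bi-bracket [s_1..s_l ; r_1..r_l] as a formal power series in Q[[q]]
  (the lists ss and rs are meant to have equal length).\<close>
definition bibracket :: "nat list \<Rightarrow> nat list \<Rightarrow> rat fps" where
  "bibracket ss rs = Abs_fps (\<lambda>n. \<Sum>(us, vs)\<in>bb_index (length ss) n.
      \<Prod>j<length ss. (of_nat (us ! j) ^ (rs ! j) / fact (rs ! j)) *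
                       (of_nat (vs ! j) ^ (ss ! j - 1) / fact (ss ! j - 1)))"

definition bracket :: "nat list \<Rightarrow> rat fps" where
  "bracket ss = bibracket ss (replicate (length ss) 0)"

definition span_one_brackets :: "nat list set \<Rightarrow> rat fps set" where
  "span_one_brackets S = {f. \<exists>c0 (c :: nat list \<Rightarrow> rat) F. finite F \<and> F \<subseteq> S \<and>
      f = fps_const c0 + (\<Sum>ts\<in>F. fps_const (c ts) * bracket ts)}"

definition MD :: "rat fps set" where
  "MD = span_one_brackets {ts. ts \<noteq> [] \<and> (\<forall>t\<in>set ts. 1 \<le> t)}"

definition Fil_WL :: "nat \<Rightarrow> nat \<Rightarrow> rat fps set" where
  "Fil_WL w l = span_one_brackets
     {ts. ts \<noteq> [] \<and> (\<forall>t\<in>set ts. 1 \<le> t) \<and> length ts \<le> l \<and> sum_list ts \<le> w}"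

end

theory Submission
  imports Defs "HOL-Computational_Algebra.Polynomial"
begin

text \<open>
  In length one the bi-bracket is \<open>\<Sum>\<^sub>u\<^sub>,\<^sub>v (v\<^sup>r/r!) (u\<^sup>s\<^sup>-\<^sup>1/(s-1)!) q\<^sup>u\<^sup>v\<close> after swapping \<open>u\<close> and \<open>v\<close>.
  Expanding \<open>v\<^sup>r\<close> in the basis \<open>binomial (v-1) (k-1)\<close>, \<open>1 \<le> k \<le> r+1\<close>, reduces the claim to the series
  \<open>p\<^sub>a\<^sub>,\<^sub>k = \<Sum> u\<^sup>a binomial (v-1) (k-1) q\<^sup>u\<^sup>v\<close>.  Two facts about the space spanned by brackets
  drive the proof.  First, any sum over the bi-bracket index set whose weight is a polynomial in
  the multiplicities \<open>v\<^sub>j\<close> is a combination of brackets of controlled weight and length; by the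
  partition conjugation \<open>(u, v) \<mapsto> (partial sums of v, differences of u)\<close>, which preserves
  \<open>\<Sum> u\<^sub>j v\<^sub>j\<close>, the same holds for weights that are monomials in the \<open>u\<^sub>j\<close>.  Second, the
  filtration is multiplicative: bi-brackets are limits of truncated nested sums, which multiply
  by the quasi-shuffle (stuffle) product, and contracting two weights polynomial in \<open>v\<close> is a
  convolution in \<open>v\<close> whose degree is additive.  Multiplying \<open>p\<^sub>a\<^sub>,\<^sub>k\<close> by
  \<open>e\<^sub>i = [1, \<dots>, 1]\<close> (\<open>i\<close> ones) then gives a Newton-type recursion which expresses \<open>p\<^sub>a\<^sub>,\<^sub>j\<close>
  through products \<open>e\<^sub>i p\<^sub>a\<^sub>,\<^sub>k\<close> with \<open>k < j\<close> and sums in which the power \<open>u\<^sup>a\<close> is the only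
  non-constant weight.
\<close>

lemma span_one_brackets_const: "fps_const c \<in> span_one_brackets S"
  unfolding span_one_brackets_def by (intro CollectI exI[of _ c] exI[of _ "\<lambda>_. 0"] exI[of _ "{}"]) simp

lemma span_one_brackets_bracket: "ts \<in> S \<Longrightarrow> bracket ts \<in> span_one_brackets S"
  unfolding span_one_brackets_def
  by (intro CollectI exI[of _ 0] exI[of _ "\<lambda>_. 1"] exI[of _ "{ts}"]) simp

lemma span_one_brackets_add:
  assumes "f \<in> span_one_brackets S" "g \<in> span_one_brackets S"
  shows "f + g \<in> span_one_brackets S"
proof -
  from assms(1) obtain c0 c F where F: "finite F" "F \<subseteq> S"
    "f = fps_const c0 + (\<Sum>ts\<in>F. fps_const (c ts) * bracket ts)"
    unfolding span_one_brackets_def by blast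
  from assms(2) obtain d0 d G where G: "finite G" "G \<subseteq> S"
    "g = fps_const d0 + (\<Sum>ts\<in>G. fps_const (d ts) * bracket ts)"
    unfolding span_one_brackets_def by blast
  define c' where "c' ts = (if ts \<in> F then c ts else 0)" for ts
  define d' where "d' ts = (if ts \<in> G then d ts else 0)" for ts
  have "(\<Sum>ts\<in>F \<union> G. fps_const (c' ts) * bracket ts) = (\<Sum>ts\<in>F. fps_const (c ts) * bracket ts)"
    by (rule sum.mono_neutral_cong_right) (auto simp: c'_def F(1) G(1))
  moreover have "(\<Sum>ts\<in>F \<union> G. fps_const (d' ts) * bracket ts) = (\<Sum>ts\<in>G. fps_const (d ts) * bracket ts)"
    by (rule sum.mono_neutral_cong_right) (auto simp: d'_def F(1) G(1))
  ultimately have "(\<Sum>ts\<in>F \<union> G. fps_const (c' ts + d' ts) * bracket ts) =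
      (\<Sum>ts\<in>F. fps_const (c ts) * bracket ts) + (\<Sum>ts\<in>G. fps_const (d ts) * bracket ts)"
    by (simp del: fps_const_add add: fps_const_add[symmetric] distrib_right sum.distrib)
  then have "f + g = fps_const (c0 + d0) + (\<Sum>ts\<in>F \<union> G. fps_const (c' ts + d' ts) * bracket ts)"
    unfolding F(3) G(3) fps_const_add[symmetric] by (simp only: ac_simps)
  moreover have "finite (F \<union> G)" "F \<union> G \<subseteq> S" using F G by auto
  ultimately show ?thesis unfolding span_one_brackets_def by (intro CollectI exI conjI)
qed

lemma span_one_brackets_smult:
  assumes "f \<in> span_one_brackets S"
  shows "fps_const a * f \<in> span_one_brackets S"
proof -
  from assms obtain c0 c F where F: "finite F" "F \<subseteq> S"
    "f = fps_const c0 + (\<Sum>ts\<in>F. fps_const (c ts) * bracket ts)"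
    unfolding span_one_brackets_def by blast
  have "fps_const a * f = fps_const (a * c0) + (\<Sum>ts\<in>F. fps_const (a * c ts) * bracket ts)"
    unfolding F(3) by (simp add: sum_distrib_left algebra_simps)
  then show ?thesis unfolding span_one_brackets_def using F by (intro CollectI exI conjI)
qed

lemma span_one_brackets_diff:
  assumes "f \<in> span_one_brackets S" "g \<in> span_one_brackets S"
  shows "f - g \<in> span_one_brackets S"
  using span_one_brackets_add[OF assms(1) span_one_brackets_smult[OF assms(2), of "-1"]]
  by (simp flip: fps_const_neg)

lemma span_one_brackets_sum:
  "(\<And>x. x \<in> A \<Longrightarrow> f x \<in> span_one_brackets S) \<Longrightarrow> sum f A \<in> span_one_brackets S"
  by (induction A rule: infinite_finite_induct)
     (auto intro: span_one_brackets_add span_one_brackets_const[of 0, simplified])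

lemma span_one_brackets_sum_list:
  "(\<And>x. x \<in> set xs \<Longrightarrow> f x \<in> span_one_brackets S) \<Longrightarrow> sum_list (map f xs) \<in> span_one_brackets S"
  by (induction xs) (auto intro: span_one_brackets_add span_one_brackets_const[of 0, simplified])

lemma span_one_brackets_mono: "S \<subseteq> T \<Longrightarrow> span_one_brackets S \<subseteq> span_one_brackets T"
  unfolding span_one_brackets_def by blast

lemma Fil_WL_mono: "f \<in> Fil_WL w l \<Longrightarrow> w \<le> w' \<Longrightarrow> l \<le> l' \<Longrightarrow> f \<in> Fil_WL w' l'"
  unfolding Fil_WL_def by (erule subsetD[OF span_one_brackets_mono, rotated]) auto

lemma bracket_in_Fil_WL:
  "ts \<noteq> [] \<Longrightarrow> \<forall>t\<in>set ts. 1 \<le> t \<Longrightarrow> length ts \<le> l \<Longrightarrow> sum_list ts \<le> w \<Longrightarrow> bracket ts \<in> Fil_WL w l"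
  unfolding Fil_WL_def by (rule span_one_brackets_bracket) simp

lemma fps_const_in_Fil_WL: "fps_const c \<in> Fil_WL w l"
  unfolding Fil_WL_def by (rule span_one_brackets_const)

lemma Fil_WL_add: "f \<in> Fil_WL w l \<Longrightarrow> g \<in> Fil_WL w l \<Longrightarrow> f + g \<in> Fil_WL w l"
  unfolding Fil_WL_def by (rule span_one_brackets_add)

lemma Fil_WL_smult: "f \<in> Fil_WL w l \<Longrightarrow> fps_const a * f \<in> Fil_WL w l"
  unfolding Fil_WL_def by (rule span_one_brackets_smult)

lemma Fil_WL_diff: "f \<in> Fil_WL w l \<Longrightarrow> g \<in> Fil_WL w l \<Longrightarrow> f - g \<in> Fil_WL w l"
  unfolding Fil_WL_def by (rule span_one_brackets_diff)

lemma Fil_WL_sum: "(\<And>x. x \<in> A \<Longrightarrow> f x \<in> Fil_WL w l) \<Longrightarrow> sum f A \<in> Fil_WL w l"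
  unfolding Fil_WL_def by (rule span_one_brackets_sum)

lemma Fil_WL_sum_list: "(\<And>x. x \<in> set xs \<Longrightarrow> f x \<in> Fil_WL w l) \<Longrightarrow> sum_list (map f xs) \<in> Fil_WL w l"
  unfolding Fil_WL_def by (rule span_one_brackets_sum_list)


section \<open>Sums over the bi-bracket index set and partition conjugation\<close>

lemma bb_index_bound:
  assumes "(us, vs) \<in> bb_index l n"
  shows "set us \<subseteq> {..n}" "set vs \<subseteq> {..n}"
proof -
  have len: "length us = l" "length vs = l" and pos: "\<forall>u\<in>set us. 0 < u" "\<forall>v\<in>set vs. 0 < v"
    and s: "(\<Sum>j<l. us ! j * vs ! j) = n" using assms unfolding bb_index_def by auto
  have "us ! j \<le> n \<and> vs ! j \<le> n" if "j < l" for j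
  proof -
    have "us ! j * vs ! j \<le> n"
      using s member_le_sum[of j "{..<l}" "\<lambda>j. us ! j * vs ! j"] that by auto
    moreover have "0 < us ! j" "0 < vs ! j" using pos len that by auto
    then have "us ! j \<le> us ! j * vs ! j" "vs ! j \<le> us ! j * vs ! j" by simp_all
    ultimately show ?thesis by linarith
  qed
  then show "set us \<subseteq> {..n}" "set vs \<subseteq> {..n}" using len by (auto simp: in_set_conv_nth)
qed

lemma finite_bb_index: "finite (bb_index l n)"
proof (rule finite_subset)
  let ?L = "{xs. set xs \<subseteq> {..n} \<and> length xs = l}"
  show "bb_index l n \<subseteq> ?L \<times> ?L"
  proof
    fix x assume x: "x \<in> bb_index l n"
    then show "x \<in> ?L \<times> ?L"
      using bb_index_bound[of "fst x" "snd x" l n] by (auto simp: bb_index_def)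
  qed
  show "finite (?L \<times> ?L)"
    by (intro finite_cartesian_product finite_lists_length_eq) auto
qed

lemma bb_index_0: "bb_index 0 n = (if n = 0 then {([], [])} else {})"
  unfolding bb_index_def by auto

definition bbsum :: "nat \<Rightarrow> (nat list \<Rightarrow> nat list \<Rightarrow> rat) \<Rightarrow> rat fps" where
  "bbsum m W = Abs_fps (\<lambda>n. \<Sum>(us, vs)\<in>bb_index m n. W us vs)"

lemma bbsum_add: "bbsum m (\<lambda>us vs. W1 us vs + W2 us vs) = bbsum m W1 + bbsum m W2"
  unfolding bbsum_def by (rule fps_ext) (simp add: sum.distrib case_prod_unfold)

lemma bbsum_smult: "bbsum m (\<lambda>us vs. c * W us vs) = fps_const c * bbsum m W"
  unfolding bbsum_def by (rule fps_ext) (simp add: sum_distrib_left case_prod_unfold)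

lemma bbsum_sum: "finite A \<Longrightarrow> bbsum m (\<lambda>us vs. \<Sum>a\<in>A. W a us vs) = (\<Sum>a\<in>A. bbsum m (W a))"
  unfolding bbsum_def fps_eq_iff fps_sum_nth by (simp add: case_prod_unfold) (intro allI sum.swap)

lemma bbsum_cong:
  "(\<And>us vs n. (us, vs) \<in> bb_index m n \<Longrightarrow> W1 us vs = W2 us vs) \<Longrightarrow> bbsum m W1 = bbsum m W2"
  unfolding bbsum_def by (rule fps_ext) (auto intro!: sum.cong)

lemma bbsum_0: "bbsum 0 W = fps_const (W [] [])"
  unfolding bbsum_def by (rule fps_ext) (simp add: bb_index_0)

lemma bibracket_eq_bbsum:
  "bibracket ss rs = bbsum (length ss) (\<lambda>us vs. \<Prod>j<length ss.
     (of_nat (us ! j) ^ (rs ! j) / fact (rs ! j)) * (of_nat (vs ! j) ^ (ss ! j - 1) / fact (ss ! j - 1)))"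
  unfolding bibracket_def bbsum_def by simp

lemma bracket_eq_bbsum:
  "bracket ts = bbsum (length ts) (\<lambda>us vs. \<Prod>j<length ts. of_nat (vs ! j) ^ (ts ! j - 1) / fact (ts ! j - 1))"
  unfolding bracket_def bibracket_eq_bbsum by simp

fun partial_sums :: "nat \<Rightarrow> nat list \<Rightarrow> nat list" where
  "partial_sums a [] = []"
| "partial_sums a (v # vs) = (a + v) # partial_sums (a + v) vs"

fun consecutive_diffs :: "nat list \<Rightarrow> nat list" where
  "consecutive_diffs [] = []"
| "consecutive_diffs [u] = [u]"
| "consecutive_diffs (u # w # us) = (u - w) # consecutive_diffs (w # us)"

definition dot :: "nat list \<Rightarrow> nat list \<Rightarrow> nat" where
  "dot xs ys = sum_list (map (\<lambda>(x, y). x * y) (zip xs ys))"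

lemma dot_Cons [simp]: "dot (x # xs) (y # ys) = x * y + dot xs ys"
  by (simp add: dot_def)

lemma dot_Nil [simp]: "dot [] ys = 0" "dot xs [] = 0"
  by (simp_all add: dot_def)

lemma sum_nth_mult_eq_dot: "length xs = length ys \<Longrightarrow> (\<Sum>j<length xs. xs ! j * ys ! j) = dot xs ys"
proof (induction xs arbitrary: ys)
  case (Cons x xs)
  then obtain y ys' where "ys = y # ys'" by (cases ys) auto
  with Cons show ?case by (simp add: sum.lessThan_Suc_shift del: sum.lessThan_Suc)
qed simp

lemma dot_rev: "length xs = length ys \<Longrightarrow> dot (rev xs) (rev ys) = dot xs ys"
  by (simp add: dot_def zip_rev rev_map[symmetric] sum_list_rev)

lemma length_partial_sums [simp]: "length (partial_sums a vs) = length vs"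
  by (induction a vs rule: partial_sums.induct) auto

lemma length_consecutive_diffs [simp]: "length (consecutive_diffs us) = length us"
  by (induction us rule: consecutive_diffs.induct) auto

lemma partial_sums_snoc: "partial_sums a (xs @ [y]) = partial_sums a xs @ [a + sum_list xs + y]"
  by (induction a xs rule: partial_sums.induct) (auto simp: add.assoc)

lemma partial_sums_nth: "i < length vs \<Longrightarrow> partial_sums a vs ! i = a + (\<Sum>k<Suc i. vs ! k)"
proof (induction a vs arbitrary: i rule: partial_sums.induct)
  case (2 a v vs)
  then show ?case by (cases i) (simp_all add: sum.lessThan_Suc_shift del: sum.lessThan_Suc)
qed simp

text \<open>Abel summation.\<close>
lemma dot_partial_sums_consecutive_diffs:
  assumes "sorted_wrt (>) us" "length us = length vs"
  shows "dot (partial_sums a vs) (consecutive_diffs us) = a * (case us of [] \<Rightarrow> 0 | u # _ \<Rightarrow> u) + dot us vs"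
  using assms
proof (induction us arbitrary: a vs rule: consecutive_diffs.induct)
  case (2 u) then show ?case by (cases vs) (auto simp: algebra_simps)
next
  case (3 u w us)
  then obtain v vs' where vs: "vs = v # vs'" by (cases vs) auto
  have "w < u" using 3(2) by simp
  have "dot (partial_sums a vs) (consecutive_diffs (u # w # us)) = (a + v) * (u - w) + ((a + v) * w + dot (w # us) vs')"
    using 3 vs by simp
  also have "\<dots> = (a + v) * ((u - w) + w) + dot (w # us) vs'"
    by (simp only: add_mult_distrib2 add.assoc)
  also have "(u - w) + w = u" using \<open>w < u\<close> by simp
  finally show ?case using vs by (simp add: algebra_simps)
qed simp

lemma sum_list_consecutive_diffs: "sorted_wrt (>) (u # us) \<Longrightarrow> sum_list (consecutive_diffs (u # us)) = u"
  by (induction "u # us" arbitrary: u us rule: consecutive_diffs.induct) auto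

lemma partial_sums_rev_consecutive_diffs:
  "sorted_wrt (>) us \<Longrightarrow> partial_sums 0 (rev (consecutive_diffs us)) = rev us"
proof (induction us rule: consecutive_diffs.induct)
  case (3 u w us)
  have "sum_list (rev (consecutive_diffs (w # us))) = w"
    using sum_list_consecutive_diffs[of w us] 3(2) by simp
  with 3 show ?case by (simp add: partial_sums_snoc)
qed simp_all

lemma consecutive_diffs_rev_partial_sums: "consecutive_diffs (rev (partial_sums 0 vs)) = rev vs"
proof (induction vs rule: rev_induct)
  case (snoc v vs)
  show ?case
  proof (cases vs rule: rev_exhaust)
    case (snoc vs' v')
    have "rev (partial_sums 0 vs) = sum_list vs # rev (partial_sums 0 vs')"
      unfolding snoc by (simp add: partial_sums_snoc)
    then have "rev (partial_sums 0 (vs @ [v])) = (sum_list vs + v) # rev (partial_sums 0 vs)"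
      "rev (partial_sums 0 vs) = sum_list vs # rev (partial_sums 0 vs')"
      by (simp_all add: partial_sums_snoc)
    then show ?thesis using snoc.IH by simp
  qed simp
qed simp

lemma partial_sums_sorted:
  "\<forall>v\<in>set vs. 0 < v \<Longrightarrow> sorted_wrt (<) (partial_sums a vs) \<and> (\<forall>x\<in>set (partial_sums a vs). a < x)"
  by (induction a vs rule: partial_sums.induct) fastforce+

lemma consecutive_diffs_pos:
  "sorted_wrt (>) us \<Longrightarrow> \<forall>u\<in>set us. 0 < u \<Longrightarrow> \<forall>x\<in>set (consecutive_diffs us). 0 < x"
  by (induction us rule: consecutive_diffs.induct) auto

text \<open>Conjugation of the partition of \<open>n\<close> with parts \<open>u\<^sub>j\<close> of multiplicity \<open>v\<^sub>j\<close>.\<close>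
definition conjugate :: "nat list \<times> nat list \<Rightarrow> nat list \<times> nat list" where
  "conjugate x = (rev (partial_sums 0 (snd x)), rev (consecutive_diffs (fst x)))"

lemma conjugate_in_bb_index:
  assumes "x \<in> bb_index m n" shows "conjugate x \<in> bb_index m n"
proof -
  obtain us vs where x: "x = (us, vs)" by (cases x)
  have A: "length us = m" "length vs = m" "sorted_wrt (>) us" "\<forall>u\<in>set us. 0 < u" "\<forall>v\<in>set vs. 0 < v"
    "(\<Sum>j<m. us ! j * vs ! j) = n" using assms unfolding x bb_index_def by auto
  have "(\<Sum>j<m. rev (partial_sums 0 vs) ! j * rev (consecutive_diffs us) ! j)
      = dot (rev (partial_sums 0 vs)) (rev (consecutive_diffs us))"
    using sum_nth_mult_eq_dot[of "rev (partial_sums 0 vs)" "rev (consecutive_diffs us)"] A by simp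
  also have "\<dots> = dot (partial_sums 0 vs) (consecutive_diffs us)" using A by (simp add: dot_rev)
  also have "\<dots> = n"
    using dot_partial_sums_consecutive_diffs[of us vs 0] A sum_nth_mult_eq_dot[of us vs] by simp
  finally show ?thesis
    unfolding x conjugate_def bb_index_def
    using A partial_sums_sorted[OF A(5), of 0] consecutive_diffs_pos[OF A(3) A(4)]
    by (auto simp: sorted_wrt_rev)
qed

lemma conjugate_conjugate: "x \<in> bb_index m n \<Longrightarrow> conjugate (conjugate x) = x"
  by (cases x) (simp add: conjugate_def bb_index_def partial_sums_rev_consecutive_diffs
      consecutive_diffs_rev_partial_sums)

lemma bbsum_conjugate:
  "bbsum m W = bbsum m (\<lambda>us vs. W (rev (partial_sums 0 vs)) (rev (consecutive_diffs us)))"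
proof -
  have "bij_betw conjugate (bb_index m n) (bb_index m n)" for n
    by (rule bij_betw_byWitness[where f'=conjugate]) (auto intro: conjugate_in_bb_index conjugate_conjugate)
  then have "(\<Sum>x\<in>bb_index m n. W (fst x) (snd x)) = (\<Sum>x\<in>bb_index m n. W (fst (conjugate x)) (snd (conjugate x)))" for n
    by (rule sum.reindex_bij_betw[symmetric])
  then show ?thesis unfolding bbsum_def conjugate_def by (simp add: case_prod_unfold)
qed

inductive poly_in_vs :: "nat \<Rightarrow> nat \<Rightarrow> (nat list \<Rightarrow> rat) \<Rightarrow> bool" for m where
  monomial: "(\<Sum>j<m. k j) \<le> D \<Longrightarrow> poly_in_vs m D (\<lambda>vs. c * (\<Prod>j<m. of_nat (vs ! j) ^ k j))"
| add: "poly_in_vs m D Wa \<Longrightarrow> poly_in_vs m D Wb \<Longrightarrow> poly_in_vs m D (\<lambda>vs. Wa vs + Wb vs)"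

lemma poly_in_vs_mono: "poly_in_vs m D W \<Longrightarrow> D \<le> D' \<Longrightarrow> poly_in_vs m D' W"
  by (induction rule: poly_in_vs.induct) (auto intro: poly_in_vs.intros)

lemma poly_in_vs_smult: "poly_in_vs m D W \<Longrightarrow> poly_in_vs m D (\<lambda>vs. a * W vs)"
proof (induction rule: poly_in_vs.induct)
  case (monomial k D c)
  then show ?case using poly_in_vs.monomial[where m=m and k=k and D=D and c="a * c"] by (simp add: mult.assoc)
next
  case (add D Wa Wb)
  then show ?case using poly_in_vs.add[where m=m and D=D and Wa="\<lambda>vs. a * Wa vs" and Wb="\<lambda>vs. a * Wb vs"] by (simp add: distrib_left)
qed

lemma poly_in_vs_const: "poly_in_vs m D (\<lambda>_. c)"
  using poly_in_vs.monomial[where m=m and k="\<lambda>_. 0" and D=D and c=c] by simp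

lemma poly_in_vs_coordinate: "j < m \<Longrightarrow> poly_in_vs m 1 (\<lambda>vs. of_nat (vs ! j))"
proof -
  assume j: "j < m"
  have "(\<Prod>i<m. (of_nat (vs ! i) :: rat) ^ (if i = j then 1 else 0)) = of_nat (vs ! j)" for vs
    using j by (simp add: if_distrib[of "\<lambda>e. _ ^ e"] cong: if_cong)
  moreover have "(\<Sum>i<m. (if i = j then 1 else 0::nat)) \<le> 1" using j by (simp add: sum.delta)
  ultimately show ?thesis
    using poly_in_vs.monomial[where m=m and k="\<lambda>i. if i = j then 1 else 0" and D=1 and c=1] by simp
qed

lemma poly_in_vs_mult_monomial:
  assumes "poly_in_vs m Db Wb" "(\<Sum>j<m. k j) \<le> D"
  shows "poly_in_vs m (D + Db) (\<lambda>vs. (c * (\<Prod>j<m. of_nat (vs ! j) ^ k j)) * Wb vs)"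
  using assms(1)
proof (induction rule: poly_in_vs.induct)
  case (monomial k' D' c')
  have "(\<Sum>j<m. k j + k' j) \<le> D + D'" using monomial assms(2) by (simp add: sum.distrib)
  from poly_in_vs.monomial[OF this, where c="c * c'"] show ?case
    by (simp add: power_add prod.distrib algebra_simps)
next
  case (add Db Wa Wb)
  then show ?case using poly_in_vs.add[where m=m and D="D + Db"] by (simp add: distrib_left)
qed

lemma poly_in_vs_mult:
  "poly_in_vs m Da Wa \<Longrightarrow> poly_in_vs m Db Wb \<Longrightarrow> poly_in_vs m (Da + Db) (\<lambda>vs. Wa vs * Wb vs)"
proof (induction rule: poly_in_vs.induct)
  case (monomial k D c)
  show ?case by (rule poly_in_vs_mult_monomial[OF monomial.prems monomial.hyps])
next
  case (add D Wa Wa')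
  then show ?case using poly_in_vs.add[where m=m and D="D + Db"] by (simp add: distrib_right)
qed

lemma poly_in_vs_sum:
  "finite A \<Longrightarrow> (\<And>a. a \<in> A \<Longrightarrow> poly_in_vs m D (W a)) \<Longrightarrow> poly_in_vs m D (\<lambda>vs. \<Sum>a\<in>A. W a vs)"
  by (induction A rule: finite_induct) (auto intro: poly_in_vs_const poly_in_vs.add)

lemma poly_in_vs_power: "poly_in_vs m D W \<Longrightarrow> poly_in_vs m (a * D) (\<lambda>vs. W vs ^ a)"
  by (induction a) (auto intro: poly_in_vs_const poly_in_vs_mult)

lemma poly_in_vs_prod:
  "(\<And>i. i < (n::nat) \<Longrightarrow> poly_in_vs m (d i) (W i)) \<Longrightarrow> poly_in_vs m (\<Sum>i<n. d i) (\<lambda>vs. \<Prod>i<n. W i vs)"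
  by (induction n) (auto intro: poly_in_vs_const poly_in_vs_mult[of _ _ _ _ "W _", simplified add.commute])

lemma poly_in_vs_poly_coordinate:
  assumes "j < m" "degree P \<le> D"
  shows "poly_in_vs m D (\<lambda>vs. poly P (of_nat (vs ! j)))"
  unfolding poly_altdef
proof (intro poly_in_vs_sum poly_in_vs_smult)
  fix i assume "i \<in> {..degree P}"
  then show "poly_in_vs m D (\<lambda>vs. of_nat (vs ! j) ^ i)"
    using poly_in_vs_power[OF poly_in_vs_coordinate[OF assms(1)], of i] assms(2)
    by (auto elim: poly_in_vs_mono)
qed simp

text \<open>A monomial weight \<open>\<Prod> v\<^sub>j\<^sup>k\<^sup>\<^sub>j\<close> is, up to the factor \<open>\<Prod> k\<^sub>j!\<close>, the bracket \<open>[k\<^sub>1+1, \<dots>, k\<^sub>m+1]\<close>.\<close>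
lemma bbsum_monomial_in_Fil_WL:
  assumes "(\<Sum>j<m. k j) \<le> D"
  shows "bbsum m (\<lambda>us vs. c * (\<Prod>j<m. of_nat (vs ! j) ^ k j)) \<in> Fil_WL (D + m) m"
proof (cases "m = 0")
  case True
  then show ?thesis by (simp add: bbsum_0 fps_const_in_Fil_WL)
next
  case False
  define ts where "ts = map (\<lambda>j. Suc (k j)) [0..<m]"
  have len: "length ts = m" and ts_nth: "\<And>j. j < m \<Longrightarrow> ts ! j = Suc (k j)"
    unfolding ts_def by simp_all
  have "bracket ts = bbsum m (\<lambda>us vs. \<Prod>j<m. of_nat (vs ! j) ^ k j / fact (k j))"
    unfolding bracket_eq_bbsum len by (rule bbsum_cong) (simp add: ts_nth)
  moreover have "c * (\<Prod>j<m. (of_nat (vs ! j) :: rat) ^ k j) =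
      (c * (\<Prod>j<m. fact (k j))) * (\<Prod>j<m. of_nat (vs ! j) ^ k j / fact (k j))" for vs
    by (simp add: prod.distrib[symmetric])
  ultimately have "bbsum m (\<lambda>us vs. c * (\<Prod>j<m. of_nat (vs ! j) ^ k j))
      = fps_const (c * (\<Prod>j<m. fact (k j))) * bracket ts"
    by (simp only: bbsum_smult)
  moreover have "sum_list ts = m + (\<Sum>j<m. k j)"
  proof -
    have "sum_list ts = (\<Sum>i<m. Suc (k i))"
      unfolding ts_def by (simp add: sum_list_sum_nth atLeast0LessThan)
    also have "\<dots> = m + (\<Sum>j<m. k j)" by (induction m) auto
    finally show ?thesis .
  qed
  ultimately show ?thesis
    using False assms len by (auto intro!: Fil_WL_smult bracket_in_Fil_WL simp: ts_def)
qed

lemma bbsum_poly_in_vs_in_Fil_WL: "poly_in_vs m D W \<Longrightarrow> bbsum m (\<lambda>us vs. W vs) \<in> Fil_WL (D + m) m"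
proof (induction rule: poly_in_vs.induct)
  case (monomial k D c) then show ?case by (rule bbsum_monomial_in_Fil_WL)
next
  case (add D Wa Wb) then show ?case by (simp add: bbsum_add Fil_WL_add)
qed

text \<open>After conjugation \<open>u\<^sub>i\<close> becomes the partial sum \<open>v\<^sub>1 + \<dots> + v\<^sub>m\<^sub>-\<^sub>i\<close>, a linear form in the multiplicities.\<close>
lemma bbsum_u_monomial_in_Fil_WL:
  "bbsum m (\<lambda>us vs. \<Prod>i<m. of_nat (us ! i) ^ a i) \<in> Fil_WL ((\<Sum>i<m. a i) + m) m"
proof -
  define W where "W vs = (\<Prod>i<m. (\<Sum>k<Suc (m - 1 - i). (of_nat (vs ! k) :: rat)) ^ a i)" for vs
  have "bbsum m (\<lambda>us vs. \<Prod>i<m. of_nat (us ! i) ^ a i)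
      = bbsum m (\<lambda>us vs. \<Prod>i<m. of_nat (rev (partial_sums 0 vs) ! i) ^ a i)"
    by (rule bbsum_conjugate)
  also have "\<dots> = bbsum m (\<lambda>us vs. W vs)"
  proof (rule bbsum_cong)
    fix us vs n assume "(us, vs) \<in> bb_index m n"
    then have "length vs = m" unfolding bb_index_def by auto
    then show "(\<Prod>i<m. of_nat (rev (partial_sums 0 vs) ! i) ^ a i) = W vs"
      unfolding W_def by (intro prod.cong) (auto simp: rev_nth partial_sums_nth)
  qed
  also have "\<dots> \<in> Fil_WL ((\<Sum>i<m. a i * 1) + m) m"
  proof (intro bbsum_poly_in_vs_in_Fil_WL)
    show "poly_in_vs m (\<Sum>i<m. a i * 1) W"
      unfolding W_def
      by (intro poly_in_vs_prod poly_in_vs_power poly_in_vs_sum poly_in_vs_coordinate) auto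
  qed
  finally show ?thesis by simp
qed

section \<open>Truncated nested sums and their stuffle product\<close>

definition pointwise_mult :: "(nat \<Rightarrow> rat fps) \<Rightarrow> (nat \<Rightarrow> rat fps) \<Rightarrow> nat \<Rightarrow> rat fps" where
  "pointwise_mult a b = (\<lambda>u. a u * b u)"

text \<open>\<open>nested_sum [g\<^sub>1, \<dots>, g\<^sub>l] N = \<Sum>\<^bsub>N > u\<^sub>1 > \<dots> > u\<^sub>l\<^esub> g\<^sub>1 u\<^sub>1 \<cdots> g\<^sub>l u\<^sub>l\<close>; the index \<open>0\<close> is not excluded
  here, the terms used below vanish there.\<close>
fun nested_sum :: "(nat \<Rightarrow> rat fps) list \<Rightarrow> nat \<Rightarrow> rat fps" where
  "nested_sum [] N = 1"
| "nested_sum (g # gs) N = (\<Sum>u<N. g u * nested_sum gs u)"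

fun stuffle :: "('a \<Rightarrow> 'a \<Rightarrow> 'a) \<Rightarrow> 'a list \<Rightarrow> 'a list \<Rightarrow> 'a list list" where
  "stuffle f [] ys = [ys]"
| "stuffle f xs [] = [xs]"
| "stuffle f (x # xs) (y # ys) =
     map ((#) x) (stuffle f xs (y # ys)) @ map ((#) y) (stuffle f (x # xs) ys) @
     map ((#) (f x y)) (stuffle f xs ys)"

lemma stuffle_Nil2 [simp]: "stuffle f xs [] = [xs]"
  by (cases xs) auto

lemma sum_nested_sum_Cons_Suc:
  "(\<Sum>c\<leftarrow>map ((#) x) L. nested_sum c (Suc N)) =
   (\<Sum>c\<leftarrow>map ((#) x) L. nested_sum c N) + x N * (\<Sum>c\<leftarrow>L. nested_sum c N)"
  by (induction L) (simp_all add: algebra_simps)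

lemma nested_sum_Cons_Suc: "nested_sum (g # gs) (Suc N) = nested_sum (g # gs) N + g N * nested_sum gs N"
  by simp

text \<open>The recursion of the stuffle mirrors the case distinction \<open>u\<^sub>1 = N\<close>, \<open>v\<^sub>1 = N\<close> or both
  when passing from \<open>N\<close> to \<open>N + 1\<close>.\<close>
lemma nested_sum_stuffle:
  "nested_sum as N * nested_sum bs N = (\<Sum>c\<leftarrow>stuffle pointwise_mult as bs. nested_sum c N)"
proof (induction N arbitrary: as bs)
  case 0
  have "(\<Sum>c\<leftarrow>map ((#) x) L. nested_sum c 0) = 0" for x L
    by (induction L) simp_all
  then show ?case by (cases as; cases bs) simp_all
next
  case (Suc N)
  have expand: "((A::rat fps) + a * A') * (B + b * B') = A * B + a * (A' * B) + b * (A * B') + (a * b) * (A' * B')"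
    for A A' B B' a b by (simp add: algebra_simps)
  have regroup: "((X1::rat fps) + a * Y1) + ((X2 + b * Y2) + (X3 + c * Y3)) = (X1 + (X2 + X3)) + a * Y1 + b * Y2 + c * Y3"
    for X1 X2 X3 Y1 Y2 Y3 a b c by (simp add: algebra_simps)
  show ?case
  proof (cases "as = [] \<or> bs = []")
    case False
    then obtain a as' b bs' where ab: "as = a # as'" "bs = b # bs'" by (meson list.exhaust)
    have "nested_sum as (Suc N) * nested_sum bs (Suc N) =
      nested_sum (a # as') N * nested_sum (b # bs') N + a N * (nested_sum as' N * nested_sum (b # bs') N)
      + b N * (nested_sum (a # as') N * nested_sum bs' N)
      + pointwise_mult a b N * (nested_sum as' N * nested_sum bs' N)"
      unfolding ab nested_sum_Cons_Suc pointwise_mult_def by (rule expand)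
    also have "\<dots> = (\<Sum>c\<leftarrow>stuffle pointwise_mult (a # as') (b # bs'). nested_sum c N)
       + a N * (\<Sum>c\<leftarrow>stuffle pointwise_mult as' (b # bs'). nested_sum c N)
       + b N * (\<Sum>c\<leftarrow>stuffle pointwise_mult (a # as') bs'. nested_sum c N)
       + pointwise_mult a b N * (\<Sum>c\<leftarrow>stuffle pointwise_mult as' bs'. nested_sum c N)"
      by (simp only: Suc.IH)
    also have "\<dots> = (\<Sum>c\<leftarrow>stuffle pointwise_mult as bs. nested_sum c (Suc N))"
      unfolding ab stuffle.simps map_append sum_list_append sum_nested_sum_Cons_Suc regroup
      by (simp only: stuffle.simps map_append sum_list_append)
    finally show ?thesis .
  qed auto
qed

definition order_ge_index :: "(nat \<Rightarrow> rat fps) \<Rightarrow> bool" where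
  "order_ge_index g \<longleftrightarrow> (\<forall>u i. i < u \<longrightarrow> fps_nth (g u) i = 0)"

lemma nth_nested_sum_stable:
  assumes "list_all order_ge_index gs" "n < N"
  shows "fps_nth (nested_sum gs N) n = fps_nth (nested_sum gs (Suc n)) n"
proof (cases gs)
  case (Cons g gs')
  have split: "{..<N} = {..<Suc n} \<union> {Suc n..<N}" using assms by auto
  have vanish: "fps_nth (g u * nested_sum gs' u) n = 0" if "u \<in> {Suc n..<N}" for u
    using assms Cons that unfolding order_ge_index_def by (auto simp: fps_mult_nth intro!: sum.neutral)
  have "fps_nth (nested_sum gs N) n = (\<Sum>u<N. fps_nth (g u * nested_sum gs' u) n)"
    unfolding Cons by (simp add: fps_sum_nth)
  also have "\<dots> = (\<Sum>u<Suc n. fps_nth (g u * nested_sum gs' u) n)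
      + (\<Sum>u\<in>{Suc n..<N}. fps_nth (g u * nested_sum gs' u) n)"
    unfolding split by (rule sum.union_disjoint) auto
  also have "(\<Sum>u\<in>{Suc n..<N}. fps_nth (g u * nested_sum gs' u) n) = 0"
    using vanish by simp
  also have "(\<Sum>u<Suc n. fps_nth (g u * nested_sum gs' u) n) = fps_nth (nested_sum gs (Suc n)) n"
    unfolding Cons by (simp add: fps_sum_nth)
  finally show ?thesis by simp
qed simp

definition nested_series :: "(nat \<Rightarrow> rat fps) list \<Rightarrow> rat fps" where
  "nested_series gs = Abs_fps (\<lambda>n. fps_nth (nested_sum gs (Suc n)) n)"

lemma nth_sum_list: "fps_nth (sum_list xs) n = (\<Sum>x\<leftarrow>xs. fps_nth x n)"
  by (induction xs) auto

lemma nested_series_stuffle: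
  assumes "list_all order_ge_index as" "list_all order_ge_index bs"
  shows "nested_series as * nested_series bs = (\<Sum>c\<leftarrow>stuffle pointwise_mult as bs. nested_series c)"
proof (rule fps_ext)
  fix n
  have "fps_nth (nested_series as * nested_series bs) n
      = (\<Sum>i=0..n. fps_nth (nested_sum as (Suc i)) i * fps_nth (nested_sum bs (Suc (n - i))) (n - i))"
    unfolding nested_series_def fps_mult_nth by simp
  also have "\<dots> = (\<Sum>i=0..n. fps_nth (nested_sum as (Suc n)) i * fps_nth (nested_sum bs (Suc n)) (n - i))"
  proof (rule sum.cong)
    fix i assume "i \<in> {0..n}"
    then have "i < Suc n" "n - i < Suc n" by auto
    show "fps_nth (nested_sum as (Suc i)) i * fps_nth (nested_sum bs (Suc (n - i))) (n - i)
        = fps_nth (nested_sum as (Suc n)) i * fps_nth (nested_sum bs (Suc n)) (n - i)"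
      using nth_nested_sum_stable[OF assms(1) \<open>i < Suc n\<close>]
        nth_nested_sum_stable[OF assms(2) \<open>n - i < Suc n\<close>] by simp
  qed simp
  also have "\<dots> = fps_nth (nested_sum as (Suc n) * nested_sum bs (Suc n)) n"
    unfolding fps_mult_nth ..
  also have "\<dots> = (\<Sum>c\<leftarrow>stuffle pointwise_mult as bs. fps_nth (nested_sum c (Suc n)) n)"
    unfolding nested_sum_stuffle nth_sum_list by (simp add: comp_def)
  also have "\<dots> = fps_nth (\<Sum>c\<leftarrow>stuffle pointwise_mult as bs. nested_series c) n"
    unfolding nth_sum_list nested_series_def by (simp add: comp_def)
  finally show "fps_nth (nested_series as * nested_series bs) n = fps_nth (\<Sum>c\<leftarrow>stuffle pointwise_mult as bs. nested_series c) n" .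
qed

section \<open>Lambert-type series\<close>

definition lambert :: "(nat \<Rightarrow> nat \<Rightarrow> rat) \<Rightarrow> nat \<Rightarrow> rat fps" where
  "lambert h u = (if u = 0 then 0 else Abs_fps (\<lambda>n. if 0 < n \<and> u dvd n then h u (n div u) else 0))"

lemma nth_lambert: "0 < u \<Longrightarrow> fps_nth (lambert h u) n = (if 0 < n \<and> u dvd n then h u (n div u) else 0)"
  unfolding lambert_def by simp

lemma order_ge_index_lambert: "order_ge_index (lambert h)"
  unfolding order_ge_index_def lambert_def by (auto dest: dvd_imp_le)

lemma lambert_cong: "(\<And>u v. 0 < u \<Longrightarrow> 0 < v \<Longrightarrow> h u v = h' u v) \<Longrightarrow> lambert h = lambert h'"
  unfolding lambert_def by (intro ext) (auto intro!: fps_ext simp: dvd_def)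

lemma sum_over_multiples:
  fixes u n :: nat and f :: "nat \<Rightarrow> 'a::comm_monoid_add"
  assumes "0 < u"
  shows "(\<Sum>i=0..n. if 0 < i \<and> u dvd i then f i else 0) = (\<Sum>v=1..n div u. f (u * v))"
proof -
  have "{i \<in> {0..n}. 0 < i \<and> u dvd i} = (\<lambda>v. u * v) ` {1..n div u}"
    using assms by (auto simp: less_eq_div_iff_mult_less_eq mult.commute[of _ u] elim!: dvdE intro!: image_eqI)
  moreover have "inj_on (\<lambda>v. u * v) {1..n div u}" using assms by (auto simp: inj_on_def)
  ultimately show ?thesis by (simp add: sum.inter_filter[symmetric] sum.reindex)
qed

lemma nth_lambert_mult:
  assumes "0 < u"
  shows "fps_nth (lambert h u * X) n = (\<Sum>v=1..n div u. h u v * fps_nth X (n - u * v))"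
proof -
  have "fps_nth (lambert h u * X) n = (\<Sum>i=0..n. if 0 < i \<and> u dvd i then h u (i div u) * fps_nth X (n - i) else 0)"
    unfolding fps_mult_nth nth_lambert[OF assms] by (intro sum.cong) auto
  also have "\<dots> = (\<Sum>v=1..n div u. h u v * fps_nth X (n - u * v))"
    using assms by (simp add: sum_over_multiples)
  finally show ?thesis .
qed

definition convolution :: "(nat \<Rightarrow> nat \<Rightarrow> rat) \<Rightarrow> (nat \<Rightarrow> nat \<Rightarrow> rat) \<Rightarrow> nat \<Rightarrow> nat \<Rightarrow> rat" where
  "convolution h1 h2 u v = (\<Sum>v1\<in>{1..<v}. h1 u v1 * h2 u (v - v1))"

lemma pointwise_mult_lambert: "pointwise_mult (lambert h1) (lambert h2) = lambert (convolution h1 h2)"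
proof (intro ext fps_ext)
  fix u n
  show "fps_nth (pointwise_mult (lambert h1) (lambert h2) u) n = fps_nth (lambert (convolution h1 h2) u) n"
  proof (cases "u = 0")
    case False
    then have u: "0 < u" by simp
    have "fps_nth (pointwise_mult (lambert h1) (lambert h2) u) n
        = (\<Sum>v=1..n div u. h1 u v * fps_nth (lambert h2 u) (n - u * v))"
      unfolding pointwise_mult_def by (rule nth_lambert_mult[OF u])
    also have "\<dots> = (\<Sum>v=1..n div u. if u dvd n \<and> v < n div u then h1 u v * h2 u (n div u - v) else 0)"
    proof (intro sum.cong refl)
      fix v assume "v \<in> {1..n div u}"
      then have "u * v \<le> n" using u by (simp add: less_eq_div_iff_mult_less_eq mult.commute)
      then have "u dvd (n - u * v) \<longleftrightarrow> u dvd n"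
        by (metis dvd_add_right_iff dvd_triv_left le_add_diff_inverse)
      moreover have "u dvd n \<Longrightarrow> n - u * v = u * (n div u - v)" by (auto simp: diff_mult_distrib2)
      ultimately show "h1 u v * fps_nth (lambert h2 u) (n - u * v)
          = (if u dvd n \<and> v < n div u then h1 u v * h2 u (n div u - v) else 0)"
        using u by (auto simp: nth_lambert)
    qed
    also have "\<dots> = fps_nth (lambert (convolution h1 h2) u) n"
      using u by (auto simp: nth_lambert convolution_def intro!: sum.mono_neutral_cong_right)
    finally show ?thesis .
  qed (simp add: pointwise_mult_def lambert_def)
qed

definition bb_index_below :: "nat \<Rightarrow> nat \<Rightarrow> nat \<Rightarrow> (nat list \<times> nat list) set" where
  "bb_index_below m n N = {x \<in> bb_index m n. \<forall>u\<in>set (fst x). u < N}"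

definition weight_prod :: "(nat \<Rightarrow> nat \<Rightarrow> rat) list \<Rightarrow> nat list \<times> nat list \<Rightarrow> rat" where
  "weight_prod hs x = (\<Prod>j<length hs. (hs ! j) (fst x ! j) (snd x ! j))"

lemma finite_bb_index_below: "finite (bb_index_below m n N)"
  unfolding bb_index_below_def using finite_bb_index by simp

lemma weight_prod_Cons: "weight_prod (h # hs) (u # us, v # vs) = h u v * weight_prod hs (us, vs)"
  unfolding weight_prod_def by (simp add: prod.lessThan_Suc_shift del: prod.lessThan_Suc)

lemma Cons_in_bb_index_below:
  "(u # us, v # vs) \<in> bb_index_below (Suc m) n N \<longleftrightarrow>
     u \<in> {1..<N} \<and> v \<in> {1..n div u} \<and> (us, vs) \<in> bb_index_below m (n - u * v) u"
proof -
  have "(\<Sum>j<Suc m. (u # us) ! j * (v # vs) ! j) = u * v + (\<Sum>j<m. us ! j * vs ! j)"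
    by (simp add: sum.lessThan_Suc_shift del: sum.lessThan_Suc)
  moreover have "0 < u \<Longrightarrow> v \<le> n div u \<longleftrightarrow> u * v \<le> n"
    by (simp add: less_eq_div_iff_mult_less_eq mult.commute)
  ultimately show ?thesis
    unfolding bb_index_below_def bb_index_def by auto
qed

lemma bb_index_below_Suc:
  "bb_index_below (Suc m) n N = (\<lambda>(u, v, x). (u # fst x, v # snd x)) `
     (SIGMA u:{1..<N}. SIGMA v:{1..n div u}. bb_index_below m (n - u * v) u)"
proof (intro set_eqI iffI)
  fix y assume y: "y \<in> bb_index_below (Suc m) n N"
  then obtain u us v vs where "y = (u # us, v # vs)"
    unfolding bb_index_below_def bb_index_def by (auto simp: length_Suc_conv)
  with y show "y \<in> (\<lambda>(u, v, x). (u # fst x, v # snd x)) ` (SIGMA u:{1..<N}. SIGMA v:{1..n div u}. bb_index_below m (n - u * v) u)"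
    by (auto simp: Cons_in_bb_index_below intro!: image_eqI[where x="(u, v, us, vs)"])
qed (auto simp: Cons_in_bb_index_below)

lemma nth_nested_sum_lambert:
  "fps_nth (nested_sum (map lambert hs) N) n = (\<Sum>x\<in>bb_index_below (length hs) n N. weight_prod hs x)"
proof (induction hs arbitrary: N n)
  case Nil
  have "bb_index_below 0 n N = (if n = 0 then {([], [])} else {})" by (auto simp: bb_index_below_def bb_index_0)
  then show ?case by (simp add: weight_prod_def)
next
  case (Cons h hs)
  define SS where "SS = (SIGMA u:{1..<N}. SIGMA v:{1..n div u}. bb_index_below (length hs) (n - u * v) u)"
  define cons where "cons = (\<lambda>(u::nat, v::nat, x::nat list \<times> nat list). (u # fst x, v # snd x))"
  have "fps_nth (nested_sum (map lambert (h # hs)) N) n = (\<Sum>u<N. fps_nth (lambert h u * nested_sum (map lambert hs) u) n)"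
    by (simp add: fps_sum_nth)
  also have "\<dots> = (\<Sum>u\<in>{1..<N}. fps_nth (lambert h u * nested_sum (map lambert hs) u) n)"
    by (rule sum.mono_neutral_right) (auto simp: lambert_def)
  also have "\<dots> = (\<Sum>u\<in>{1..<N}. \<Sum>v\<in>{1..n div u}. \<Sum>x\<in>bb_index_below (length hs) (n - u * v) u. h u v * weight_prod hs x)"
    by (intro sum.cong refl) (simp add: nth_lambert_mult Cons.IH sum_distrib_left)
  also have "\<dots> = (\<Sum>z\<in>SS. weight_prod (h # hs) (cons z))"
    unfolding SS_def cons_def by (simp add: sum.Sigma finite_bb_index_below split_def weight_prod_Cons)
  also have "\<dots> = (\<Sum>y\<in>cons ` SS. weight_prod (h # hs) y)"
  proof (rule sum.reindex[symmetric, unfolded comp_def])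
    show "inj_on cons SS" by (auto simp: cons_def SS_def inj_on_def)
  qed
  also have "cons ` SS = bb_index_below (length (h # hs)) n N"
    unfolding cons_def SS_def by (simp add: bb_index_below_Suc)
  finally show ?case .
qed

lemma nested_series_lambert:
  "nested_series (map lambert hs) = bbsum (length hs) (\<lambda>us vs. \<Prod>j<length hs. (hs ! j) (us ! j) (vs ! j))"
proof (rule fps_ext)
  fix n
  have "bb_index_below (length hs) n (Suc n) = bb_index (length hs) n"
    unfolding bb_index_below_def using bb_index_bound by fastforce
  then show "fps_nth (nested_series (map lambert hs)) n
      = fps_nth (bbsum (length hs) (\<lambda>us vs. \<Prod>j<length hs. (hs ! j) (us ! j) (vs ! j))) n"
    unfolding nested_series_def bbsum_def by (simp add: nth_nested_sum_lambert weight_prod_def case_prod_unfold)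
qed

section \<open>Weights polynomial in \<open>v\<close> and products of brackets\<close>

definition poly_on_positive :: "nat \<Rightarrow> (nat \<Rightarrow> rat) \<Rightarrow> bool" where
  "poly_on_positive D f \<longleftrightarrow> (\<exists>P. degree P \<le> D \<and> (\<forall>v\<ge>1. f v = poly P (of_nat v)))"

lemma poly_on_positive_mono: "poly_on_positive D f \<Longrightarrow> D \<le> D' \<Longrightarrow> poly_on_positive D' f"
  unfolding poly_on_positive_def by (meson order_trans)

lemma poly_on_positive_add:
  "poly_on_positive D f \<Longrightarrow> poly_on_positive D g \<Longrightarrow> poly_on_positive D (\<lambda>v. f v + g v)"
  unfolding poly_on_positive_def by (metis degree_add_le poly_add)

lemma poly_on_positive_smult: "poly_on_positive D f \<Longrightarrow> poly_on_positive D (\<lambda>v. c * f v)"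
  unfolding poly_on_positive_def by (metis degree_smult_le order_trans poly_smult)

lemma poly_on_positive_mult:
  "poly_on_positive D1 f \<Longrightarrow> poly_on_positive D2 g \<Longrightarrow> poly_on_positive (D1 + D2) (\<lambda>v. f v * g v)"
  unfolding poly_on_positive_def by (metis (no_types, lifting) add_mono degree_mult_le order_trans poly_mult)

lemma poly_on_positive_power: "poly_on_positive k (\<lambda>v. of_nat v ^ k)"
  unfolding poly_on_positive_def by (rule exI[of _ "monom 1 k"]) (simp add: degree_monom_le poly_monom)

lemma poly_on_positive_sum:
  "finite A \<Longrightarrow> (\<And>a. a \<in> A \<Longrightarrow> poly_on_positive D (f a)) \<Longrightarrow> poly_on_positive D (\<lambda>v. \<Sum>a\<in>A. f a v)"
proof (induction A rule: finite_induct)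
  case empty
  have "poly_on_positive D (\<lambda>v. 0)" unfolding poly_on_positive_def by (rule exI[of _ 0]) simp
  then show ?case by simp
next
  case (insert x F) then show ?case using poly_on_positive_add[of D "f x" "\<lambda>v. \<Sum>a\<in>F. f a v"] by simp
qed

text \<open>Telescoping \<open>(x + 1)\<^sup>k\<^sup>+\<^sup>1 - x\<^sup>k\<^sup>+\<^sup>1\<close> over \<open>x < n\<close>.\<close>
lemma Suc_times_power_sum:
  "of_nat (Suc k) * (\<Sum>x<n. (of_nat x :: 'a::comm_ring_1) ^ k)
     = of_nat n ^ Suc k - (\<Sum>i<k. of_nat (Suc k choose i) * (\<Sum>x<n. of_nat x ^ i))"
proof -
  have step: "(of_nat x + 1 :: 'a) ^ Suc k - of_nat x ^ Suc k = (\<Sum>i\<le>k. of_nat (Suc k choose i) * of_nat x ^ i)" for x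
    using binomial_ring[of "of_nat x :: 'a" 1 "Suc k"] by simp
  have "of_nat n ^ Suc k = (\<Sum>x<n. (of_nat x + 1 :: 'a) ^ Suc k - of_nat x ^ Suc k)"
    by (induction n) (simp_all add: algebra_simps)
  also have "\<dots> = (\<Sum>i\<le>k. of_nat (Suc k choose i) * (\<Sum>x<n. of_nat x ^ i))"
    unfolding step by (subst sum.swap) (simp add: sum_distrib_left)
  also have "\<dots> = (\<Sum>i<k. of_nat (Suc k choose i) * (\<Sum>x<n. of_nat x ^ i)) + of_nat (Suc k) * (\<Sum>x<n. of_nat x ^ k)"
    by (simp add: lessThan_Suc_atMost[symmetric])
  finally show ?thesis by (simp add: algebra_simps)
qed

lemma power_sum_poly: "\<exists>P :: rat poly. degree P \<le> Suc k \<and> (\<forall>n. (\<Sum>x<n. of_nat x ^ k) = poly P (of_nat n))"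
proof (induction k rule: less_induct)
  case (less k)
  then obtain Q where Q: "\<And>i. i < k \<Longrightarrow> degree (Q i) \<le> Suc i \<and> (\<forall>n. (\<Sum>x<n. (of_nat x :: rat) ^ i) = poly (Q i) (of_nat n))"
    by metis
  define P where "P = smult (1 / of_nat (Suc k)) (monom 1 (Suc k) - (\<Sum>i<k. smult (of_nat (Suc k choose i)) (Q i)))"
  have "degree (\<Sum>i<k. smult (of_nat (Suc k choose i)) (Q i)) \<le> Suc k"
    by (rule degree_sum_le) (use Q degree_smult_le order_trans in fastforce)+
  then have "degree P \<le> Suc k"
    unfolding P_def by (meson degree_diff_le degree_monom_le degree_smult_le order_trans)
  moreover have "(\<Sum>x<n. (of_nat x :: rat) ^ k) = poly P (of_nat n)" for n
    using Suc_times_power_sum[of k n, where 'a=rat] Q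
    unfolding P_def by (simp add: poly_sum poly_monom field_simps del: of_nat_Suc)
  ultimately show ?case by blast
qed

lemma poly_on_positive_power_sum: "poly_on_positive (Suc c) (\<lambda>v. \<Sum>x\<in>{1..<v}. (of_nat x :: rat) ^ c)"
proof -
  obtain P :: "rat poly" where P: "degree P \<le> Suc c" "\<And>n. (\<Sum>x<n. of_nat x ^ c) = poly P (of_nat n)"
    using power_sum_poly[of c] by blast
  have "(\<Sum>x\<in>{1..<v}. (of_nat x :: rat) ^ c) = poly (P - [:0 ^ c:]) (of_nat v)" if "v \<ge> 1" for v
  proof -
    have "{..<v} = insert 0 {1..<v}" using that by auto
    then show ?thesis using P(2)[of v] by simp
  qed
  moreover have "degree (P - [:0 ^ c:]) \<le> Suc c" using P(1) by (intro degree_diff_le) auto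
  ultimately show ?thesis unfolding poly_on_positive_def by blast
qed

lemma poly_on_positive_convolution_monomial:
  "poly_on_positive (a + b + 1) (\<lambda>v. \<Sum>x\<in>{1..<v}. (of_nat x :: rat) ^ a * (of_nat v - of_nat x) ^ b)"
proof -
  define c where "c j = (of_nat (b choose j) * (-1) ^ (b - j) :: rat)" for j
  have "(\<Sum>x\<in>{1..<v}. (of_nat x :: rat) ^ a * (of_nat v - of_nat x) ^ b) =
      (\<Sum>j\<le>b. c j * (of_nat v ^ j * (\<Sum>x\<in>{1..<v}. of_nat x ^ (a + (b - j)))))" for v
  proof -
    have expand: "(of_nat x :: rat) ^ a * (of_nat v - of_nat x) ^ b
        = (\<Sum>j\<le>b. c j * (of_nat v ^ j * of_nat x ^ (a + (b - j))))" for x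
    proof -
      have "(of_nat v - of_nat x :: rat) ^ b = (\<Sum>j\<le>b. of_nat (b choose j) * of_nat v ^ j * (- of_nat x) ^ (b - j))"
        using binomial_ring[of "of_nat v :: rat" "- of_nat x" b] by simp
      then have "(of_nat x :: rat) ^ a * (of_nat v - of_nat x) ^ b
          = (\<Sum>j\<le>b. of_nat x ^ a * (of_nat (b choose j) * of_nat v ^ j * (- of_nat x) ^ (b - j)))"
        by (simp add: sum_distrib_left)
      also have "\<dots> = (\<Sum>j\<le>b. c j * (of_nat v ^ j * of_nat x ^ (a + (b - j))))"
        by (intro sum.cong refl) (simp add: c_def power_minus[of "of_nat x"] mult_ac flip: power_add)
      finally show ?thesis .
    qed
    have "(\<Sum>x\<in>{1..<v}. (of_nat x :: rat) ^ a * (of_nat v - of_nat x) ^ b)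
        = (\<Sum>j\<le>b. \<Sum>x\<in>{1..<v}. c j * (of_nat v ^ j * of_nat x ^ (a + (b - j))))"
      unfolding expand by (rule sum.swap)
    then show ?thesis by (simp only: sum_distrib_left)
  qed
  moreover have "poly_on_positive (a + b + 1)
      (\<lambda>v. \<Sum>j\<le>b. c j * (of_nat v ^ j * (\<Sum>x\<in>{1..<v}. (of_nat x :: rat) ^ (a + (b - j)))))"
  proof (intro poly_on_positive_sum poly_on_positive_smult)
    fix j assume "j \<in> {..b}"
    then have "j + Suc (a + (b - j)) = a + b + 1" by simp
    with poly_on_positive_mult[OF poly_on_positive_power poly_on_positive_power_sum, of j "a + (b - j)"]
    show "poly_on_positive (a + b + 1) (\<lambda>v. of_nat v ^ j * (\<Sum>x\<in>{1..<v}. (of_nat x :: rat) ^ (a + (b - j))))"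
      by simp
  qed simp
  ultimately show ?thesis by simp
qed

text \<open>A weight of degree \<open>d\<close> is a polynomial in \<open>v\<close> of degree \<open>< d\<close>, independent of \<open>u\<close>; the weight
  of \<open>[t\<^sub>1, \<dots>, t\<^sub>l]\<close> at position \<open>j\<close> has degree \<open>t\<^sub>j\<close>.\<close>
definition poly_weight :: "nat \<Rightarrow> (nat \<Rightarrow> nat \<Rightarrow> rat) \<Rightarrow> bool" where
  "poly_weight d h \<longleftrightarrow> 1 \<le> d \<and> (\<exists>P. degree P < d \<and> (\<forall>u v. 0 < u \<longrightarrow> 0 < v \<longrightarrow> h u v = poly P (of_nat v)))"

lemma poly_weight_convolution:
  assumes "poly_weight d1 h1" "poly_weight d2 h2"
  shows "poly_weight (d1 + d2) (convolution h1 h2)"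
proof -
  obtain P1 where P1: "degree P1 < d1" "\<And>u v. 0 < u \<Longrightarrow> 0 < v \<Longrightarrow> h1 u v = poly P1 (of_nat v)" "1 \<le> d1"
    using assms(1) unfolding poly_weight_def by blast
  obtain P2 where P2: "degree P2 < d2" "\<And>u v. 0 < u \<Longrightarrow> 0 < v \<Longrightarrow> h2 u v = poly P2 (of_nat v)" "1 \<le> d2"
    using assms(2) unfolding poly_weight_def by blast
  define F where "F v = (\<Sum>i\<le>degree P1. \<Sum>j\<le>degree P2. (coeff P1 i * coeff P2 j) *
      (\<Sum>x\<in>{1..<v}. (of_nat x :: rat) ^ i * (of_nat v - of_nat x) ^ j))" for v
  have "poly_on_positive (d1 + d2 - 1) F"
    unfolding F_def
  proof (intro poly_on_positive_sum poly_on_positive_smult)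
    fix i j assume "i \<in> {..degree P1}" "j \<in> {..degree P2}"
    then have "i + j + 1 \<le> d1 + d2 - 1" using P1(1) P2(1) by auto
    then show "poly_on_positive (d1 + d2 - 1) (\<lambda>v. \<Sum>x\<in>{1..<v}. (of_nat x :: rat) ^ i * (of_nat v - of_nat x) ^ j)"
      by (rule poly_on_positive_mono[OF poly_on_positive_convolution_monomial])
  qed auto
  then obtain P where P: "degree P \<le> d1 + d2 - 1" "\<And>v. v \<ge> 1 \<Longrightarrow> F v = poly P (of_nat v)"
    unfolding poly_on_positive_def by blast
  have "convolution h1 h2 u v = F v" if "0 < u" "0 < v" for u v
  proof -
    have "convolution h1 h2 u v = (\<Sum>x\<in>{1..<v}. poly P1 (of_nat x) * poly P2 (of_nat v - of_nat x))"
      unfolding convolution_def using that by (intro sum.cong) (auto simp: P1(2) P2(2) of_nat_diff)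
    also have "\<dots> = (\<Sum>x\<in>{1..<v}. \<Sum>i\<le>degree P1. \<Sum>j\<le>degree P2. (coeff P1 i * coeff P2 j) * ((of_nat x :: rat) ^ i * (of_nat v - of_nat x) ^ j))"
      unfolding poly_altdef by (simp add: sum_product algebra_simps)
    also have "\<dots> = (\<Sum>i\<le>degree P1. \<Sum>x\<in>{1..<v}. \<Sum>j\<le>degree P2. (coeff P1 i * coeff P2 j) * ((of_nat x :: rat) ^ i * (of_nat v - of_nat x) ^ j))"
      by (rule sum.swap)
    also have "\<dots> = (\<Sum>i\<le>degree P1. \<Sum>j\<le>degree P2. \<Sum>x\<in>{1..<v}. (coeff P1 i * coeff P2 j) * ((of_nat x :: rat) ^ i * (of_nat v - of_nat x) ^ j))"
      by (rule sum.cong[OF refl], rule sum.swap)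
    also have "\<dots> = F v"
      unfolding F_def by (simp add: sum_distrib_left)
    finally show ?thesis .
  qed
  then show ?thesis unfolding poly_weight_def using P P1(3) P2(3) by (intro conjI exI[of _ P]) auto
qed


lemma poly_weights_prod_poly_in_vs:
  assumes "list_all2 poly_weight ds hs"
  obtains W where "poly_in_vs (length hs) (\<Sum>j<length hs. ds ! j - 1) W"
    and "\<And>us vs n. (us, vs) \<in> bb_index (length hs) n \<Longrightarrow> (\<Prod>j<length hs. (hs ! j) (us ! j) (vs ! j)) = W vs"
proof -
  let ?m = "length hs"
  have "\<forall>j\<in>{..<?m}. \<exists>P. degree P < ds ! j \<and> (\<forall>u v. 0 < u \<longrightarrow> 0 < v \<longrightarrow> (hs ! j) u v = poly P (of_nat v))"
    using assms unfolding list_all2_conv_all_nth poly_weight_def by auto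
  then obtain P where P: "\<And>j. j < ?m \<Longrightarrow> degree (P j) < ds ! j"
    "\<And>j u v. j < ?m \<Longrightarrow> 0 < u \<Longrightarrow> 0 < v \<Longrightarrow> (hs ! j) u v = poly (P j) (of_nat v)"
    by (metis bchoice lessThan_iff)
  show ?thesis
  proof
    show "poly_in_vs ?m (\<Sum>j<?m. ds ! j - 1) (\<lambda>vs. \<Prod>j<?m. poly (P j) (of_nat (vs ! j)))"
      by (intro poly_in_vs_prod poly_in_vs_poly_coordinate) (use P(1) in force)+
    fix us vs n assume "(us, vs) \<in> bb_index ?m n"
    then have "\<And>j. j < ?m \<Longrightarrow> 0 < us ! j \<and> 0 < vs ! j" unfolding bb_index_def by auto
    then show "(\<Prod>j<?m. (hs ! j) (us ! j) (vs ! j)) = (\<Prod>j<?m. poly (P j) (of_nat (vs ! j)))"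
      using P(2) by (intro prod.cong) auto
  qed
qed

lemma nested_series_poly_weights_in_Fil_WL:
  assumes "list_all2 poly_weight ds hs"
  shows "nested_series (map lambert hs) \<in> Fil_WL (sum_list ds) (length hs)"
proof -
  let ?m = "length hs"
  obtain W where W: "poly_in_vs ?m (\<Sum>j<?m. ds ! j - 1) W"
    "\<And>us vs n. (us, vs) \<in> bb_index ?m n \<Longrightarrow> (\<Prod>j<?m. (hs ! j) (us ! j) (vs ! j)) = W vs"
    using poly_weights_prod_poly_in_vs[OF assms] by blast
  have len: "length ds = ?m" using assms by (simp add: list_all2_lengthD)
  have "(\<Sum>j<?m. ds ! j - 1) + ?m = sum_list ds"
  proof -
    have "\<And>j. j < ?m \<Longrightarrow> 1 \<le> ds ! j"
      using assms unfolding list_all2_conv_all_nth poly_weight_def by auto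
    then have "(\<Sum>j<?m. ds ! j - 1) = (\<Sum>j<?m. ds ! j) - ?m" by (subst sum_subtractf_nat) auto
    moreover have "?m \<le> (\<Sum>j<?m. ds ! j)"
      using sum_mono[of "{..<?m}" "\<lambda>_. 1" "\<lambda>j. ds ! j"] \<open>\<And>j. j < ?m \<Longrightarrow> 1 \<le> ds ! j\<close> by simp
    ultimately show ?thesis using len by (simp add: sum_list_sum_nth atLeast0LessThan)
  qed
  moreover have "nested_series (map lambert hs) = bbsum ?m (\<lambda>us vs. W vs)"
    unfolding nested_series_lambert by (rule bbsum_cong) (rule W(2))
  ultimately show ?thesis using bbsum_poly_in_vs_in_Fil_WL[OF W(1)] by simp
qed

definition bracket_weight :: "nat \<Rightarrow> nat \<Rightarrow> nat \<Rightarrow> rat" where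
  "bracket_weight t u v = of_nat v ^ (t - 1) / fact (t - 1)"

lemma poly_weight_bracket_weight: "1 \<le> t \<Longrightarrow> poly_weight t (bracket_weight t)"
  unfolding poly_weight_def bracket_weight_def
  by (intro conjI exI[of _ "smult (1 / fact (t - 1)) (monom 1 (t - 1))"])
     (auto simp: poly_monom intro: le_less_trans[OF degree_smult_le] le_less_trans[OF degree_monom_le])

lemma bracket_eq_nested_series: "bracket ts = nested_series (map lambert (map bracket_weight ts))"
  unfolding bracket_eq_bbsum nested_series_lambert by (simp add: bracket_weight_def)

lemma stuffle_map_lambert:
  "stuffle pointwise_mult (map lambert hs1) (map lambert hs2) = map (map lambert) (stuffle convolution hs1 hs2)"
  by (induction convolution hs1 hs2 rule: stuffle.induct) (simp_all add: pointwise_mult_lambert)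

lemma length_stuffle_le: "c \<in> set (stuffle f xs ys) \<Longrightarrow> length c \<le> length xs + length ys"
  by (induction f xs ys arbitrary: c rule: stuffle.induct) fastforce+

lemma stuffle_poly_weights:
  assumes "list_all2 poly_weight ds1 hs1" "list_all2 poly_weight ds2 hs2" "c \<in> set (stuffle convolution hs1 hs2)"
  shows "\<exists>ds. list_all2 poly_weight ds c \<and> sum_list ds = sum_list ds1 + sum_list ds2"
  using assms
proof (induction convolution hs1 hs2 arbitrary: ds1 ds2 c rule: stuffle.induct)
  case (3 x xs y ys)
  obtain d1 ds1' where d1: "ds1 = d1 # ds1'" "poly_weight d1 x" "list_all2 poly_weight ds1' xs"
    using 3(4) by (cases ds1) auto
  obtain d2 ds2' where d2: "ds2 = d2 # ds2'" "poly_weight d2 y" "list_all2 poly_weight ds2' ys"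
    using 3(5) by (cases ds2) auto
  from 3(6) consider (left) c' where "c = x # c'" "c' \<in> set (stuffle convolution xs (y # ys))"
    | (right) c' where "c = y # c'" "c' \<in> set (stuffle convolution (x # xs) ys)"
    | (both) c' where "c = convolution x y # c'" "c' \<in> set (stuffle convolution xs ys)"
    by auto
  then show ?case
  proof cases
    case left
    then obtain ds where "list_all2 poly_weight ds c'" "sum_list ds = sum_list ds1' + sum_list ds2"
      using 3(1)[OF d1(3) 3(5)] by blast
    then show ?thesis using left d1 by (intro exI[of _ "d1 # ds"]) simp
  next
    case right
    then obtain ds where "list_all2 poly_weight ds c'" "sum_list ds = sum_list ds1 + sum_list ds2'"
      using 3(2)[OF 3(4) d2(3)] by blast
    then show ?thesis using right d2 by (intro exI[of _ "d2 # ds"]) simp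
  next
    case both
    then obtain ds where "list_all2 poly_weight ds c'" "sum_list ds = sum_list ds1' + sum_list ds2'"
      using 3(3)[OF d1(3) d2(3)] by blast
    then show ?thesis using both d1 d2 poly_weight_convolution[OF d1(2) d2(2)]
      by (intro exI[of _ "(d1 + d2) # ds"]) simp
  qed
qed auto

lemma list_all2_poly_weight_bracket_weight:
  "\<forall>t\<in>set ts. 1 \<le> t \<Longrightarrow> list_all2 poly_weight ts (map bracket_weight ts)"
  by (induction ts) (auto intro: poly_weight_bracket_weight)

lemma bracket_mult_in_Fil_WL:
  assumes "\<forall>t\<in>set ts1. 1 \<le> t" "\<forall>t\<in>set ts2. 1 \<le> t"
  shows "bracket ts1 * bracket ts2 \<in> Fil_WL (sum_list ts1 + sum_list ts2) (length ts1 + length ts2)"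
proof -
  let ?hs1 = "map bracket_weight ts1" and ?hs2 = "map bracket_weight ts2"
  have "bracket ts1 * bracket ts2 = (\<Sum>c\<leftarrow>stuffle pointwise_mult (map lambert ?hs1) (map lambert ?hs2). nested_series c)"
    unfolding bracket_eq_nested_series by (rule nested_series_stuffle) (simp_all add: list_all_iff order_ge_index_lambert)
  also have "\<dots> = (\<Sum>c\<leftarrow>stuffle convolution ?hs1 ?hs2. nested_series (map lambert c))"
    unfolding stuffle_map_lambert by (simp add: comp_def)
  also have "\<dots> \<in> Fil_WL (sum_list ts1 + sum_list ts2) (length ts1 + length ts2)"
  proof (rule Fil_WL_sum_list)
    fix c assume c: "c \<in> set (stuffle convolution ?hs1 ?hs2)"
    obtain ds where "list_all2 poly_weight ds c" "sum_list ds = sum_list ts1 + sum_list ts2"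
      using stuffle_poly_weights[OF list_all2_poly_weight_bracket_weight[OF assms(1)]
          list_all2_poly_weight_bracket_weight[OF assms(2)] c] by blast
    with length_stuffle_le[OF c] show "nested_series (map lambert c) \<in> Fil_WL (sum_list ts1 + sum_list ts2) (length ts1 + length ts2)"
      using nested_series_poly_weights_in_Fil_WL Fil_WL_mono by fastforce
  qed
  finally show ?thesis .
qed

lemma span_one_brackets_mult:
  assumes "f \<in> span_one_brackets S" "g \<in> span_one_brackets T" "S \<subseteq> U" "T \<subseteq> U"
    and "\<And>ts ts'. ts \<in> S \<Longrightarrow> ts' \<in> T \<Longrightarrow> bracket ts * bracket ts' \<in> span_one_brackets U"
  shows "f * g \<in> span_one_brackets U"
proof -
  from assms(1) obtain c0 c F where F: "finite F" "F \<subseteq> S"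
    "f = fps_const c0 + (\<Sum>ts\<in>F. fps_const (c ts) * bracket ts)"
    unfolding span_one_brackets_def by blast
  from assms(2) obtain d0 d H where H: "finite H" "H \<subseteq> T"
    "g = fps_const d0 + (\<Sum>ts\<in>H. fps_const (d ts) * bracket ts)"
    unfolding span_one_brackets_def by blast
  have g: "g \<in> span_one_brackets U" using assms(2,4) span_one_brackets_mono by blast
  have "bracket ts * g \<in> span_one_brackets U" if "ts \<in> F" for ts
  proof -
    have "bracket ts * g = fps_const d0 * bracket ts + (\<Sum>ts'\<in>H. fps_const (d ts') * (bracket ts * bracket ts'))"
      unfolding H(3) by (simp add: algebra_simps sum_distrib_left)
    also have "\<dots> \<in> span_one_brackets U"
      using that F(2) H(2) assms(3)
      by (intro span_one_brackets_add span_one_brackets_smult span_one_brackets_sum span_one_brackets_bracket)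
         (auto intro: assms(5))
    finally show ?thesis .
  qed
  moreover have "f * g = fps_const c0 * g + (\<Sum>ts\<in>F. fps_const (c ts) * (bracket ts * g))"
    unfolding F(3) by (simp add: distrib_right sum_distrib_right mult.assoc)
  ultimately show ?thesis
    using g by (auto intro!: span_one_brackets_add span_one_brackets_smult span_one_brackets_sum)
qed

lemma Fil_WL_mult: "f \<in> Fil_WL w1 l1 \<Longrightarrow> g \<in> Fil_WL w2 l2 \<Longrightarrow> f * g \<in> Fil_WL (w1 + w2) (l1 + l2)"
  unfolding Fil_WL_def
proof (erule span_one_brackets_mult, assumption)
  fix ts ts' assume "ts \<in> {ts. ts \<noteq> [] \<and> (\<forall>t\<in>set ts. 1 \<le> t) \<and> length ts \<le> l1 \<and> sum_list ts \<le> w1}"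
    and "ts' \<in> {ts. ts \<noteq> [] \<and> (\<forall>t\<in>set ts. 1 \<le> t) \<and> length ts \<le> l2 \<and> sum_list ts \<le> w2}"
  then show "bracket ts * bracket ts' \<in> span_one_brackets
      {ts. ts \<noteq> [] \<and> (\<forall>t\<in>set ts. 1 \<le> t) \<and> length ts \<le> l1 + l2 \<and> sum_list ts \<le> w1 + w2}"
    using bracket_mult_in_Fil_WL[of ts ts'] Fil_WL_mono[of _ _ _ "w1 + w2" "l1 + l2"]
    unfolding Fil_WL_def by auto
qed auto

section \<open>The Newton-type recursion\<close>

lemma sum_stuffle_replicate_singleton:
  fixes F :: "'a list \<Rightarrow> 'b::comm_monoid_add"
  shows "sum_list (map F (stuffle f (replicate i g) [p])) =
     (\<Sum>x\<le>i. F (replicate x g @ p # replicate (i - x) g)) +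
     (\<Sum>x<i. F (replicate x g @ f g p # replicate (i - 1 - x) g))"
proof (induction i arbitrary: F)
  case (Suc i)
  have A: "sum_list (map F (stuffle f (replicate (Suc i) g) [p])) =
     sum_list (map (F \<circ> (#) g) (stuffle f (replicate i g) [p])) + F (p # g # replicate i g) + F (f g p # replicate i g)"
    by (simp add: add.assoc)
  have B: "sum_list (map (F \<circ> (#) g) (stuffle f (replicate i g) [p])) =
     (\<Sum>x\<le>i. F (replicate (Suc x) g @ p # replicate (i - x) g)) +
     (\<Sum>x<i. F (replicate (Suc x) g @ f g p # replicate (i - 1 - x) g))"
    unfolding Suc.IH by simp
  have C: "(\<Sum>x\<le>Suc i. F (replicate x g @ p # replicate (Suc i - x) g)) =
      F (p # g # replicate i g) + (\<Sum>x\<le>i. F (replicate (Suc x) g @ p # replicate (i - x) g))"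
    by (subst sum.atMost_Suc_shift) simp
  have D0: "Suc i - 1 - Suc x = i - 1 - x" for x by simp
  have D: "(\<Sum>x<Suc i. F (replicate x g @ f g p # replicate (Suc i - 1 - x) g)) =
      F (f g p # replicate i g) + (\<Sum>x<i. F (replicate (Suc x) g @ f g p # replicate (i - 1 - x) g))"
    by (subst sum.lessThan_Suc_shift) (simp only: D0, simp)
  show ?case unfolding A B C D by (simp only: ac_simps)
qed simp

definition u_power :: "nat \<Rightarrow> nat \<Rightarrow> nat \<Rightarrow> rat" where
  "u_power a u v = of_nat u ^ a"

definition u_power_binom :: "nat \<Rightarrow> nat \<Rightarrow> nat \<Rightarrow> nat \<Rightarrow> rat" where
  "u_power_binom a k u v = of_nat u ^ a * of_nat ((v - 1) choose (k - 1))"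

lemma sum_binomial_pred: "1 \<le> k \<Longrightarrow> (\<Sum>x\<in>{1..<v}. (x - 1) choose (k - 1)) = (v - 1) choose k"
proof (induction v)
  case (Suc v)
  show ?case
  proof (cases v)
    case (Suc w)
    have "{1..<Suc v} = insert v {1..<v}" using Suc by auto
    then have "(\<Sum>x\<in>{1..<Suc v}. (x - 1) choose (k - 1)) = ((v - 1) choose (k - 1)) + ((v - 1) choose k)"
      using Suc.IH Suc.prems by simp
    also have "\<dots> = v choose k" using Suc.prems Suc by (cases k) auto
    finally show ?thesis by simp
  qed (use Suc.prems in simp)
qed simp

lemma pointwise_mult_lambert_u_power_binom:
  assumes "1 \<le> k"
  shows "pointwise_mult (lambert (u_power 0)) (lambert (u_power_binom a k)) = lambert (u_power_binom a (Suc k))"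
proof -
  have "convolution (u_power_binom a k) (u_power 0) u v = u_power_binom a (Suc k) u v" for u v
  proof -
    have "convolution (u_power_binom a k) (u_power 0) u v
        = of_nat u ^ a * of_nat (\<Sum>x\<in>{1..<v}. (x - 1) choose (k - 1))"
      unfolding convolution_def u_power_binom_def u_power_def by (simp add: sum_distrib_left)
    then show ?thesis unfolding sum_binomial_pred[OF assms] u_power_binom_def by simp
  qed
  then have "lambert (convolution (u_power_binom a k) (u_power 0)) = lambert (u_power_binom a (Suc k))"
    by (intro lambert_cong) simp
  moreover have "pointwise_mult (lambert (u_power 0)) (lambert (u_power_binom a k))
      = pointwise_mult (lambert (u_power_binom a k)) (lambert (u_power 0))"
    unfolding pointwise_mult_def by (simp add: mult.commute)
  ultimately show ?thesis by (simp add: pointwise_mult_lambert)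
qed

definition e_series :: "nat \<Rightarrow> rat fps" where
  "e_series i = nested_series (replicate i (lambert (u_power 0)))"

definition p_series :: "nat \<Rightarrow> nat \<Rightarrow> rat fps" where
  "p_series a k = nested_series [lambert (u_power_binom a k)]"

definition mixed_series :: "nat \<Rightarrow> nat \<Rightarrow> nat \<Rightarrow> rat fps" where
  "mixed_series a i k = (\<Sum>x\<le>i. nested_series
     (replicate x (lambert (u_power 0)) @ lambert (u_power_binom a k) # replicate (i - x) (lambert (u_power 0))))"

lemma e_series_mult_p_series:
  assumes "1 \<le> k" "1 \<le> i"
  shows "e_series i * p_series a k = mixed_series a i k + mixed_series a (i - 1) (Suc k)"
proof -
  have "e_series i * p_series a k
      = sum_list (map nested_series (stuffle pointwise_mult (replicate i (lambert (u_power 0))) [lambert (u_power_binom a k)]))"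
    unfolding e_series_def p_series_def
    by (rule nested_series_stuffle) (simp_all add: order_ge_index_lambert list_all_iff)
  also have "\<dots> = mixed_series a i k + mixed_series a (i - 1) (Suc k)"
    unfolding sum_stuffle_replicate_singleton mixed_series_def pointwise_mult_lambert_u_power_binom[OF assms(1)]
    using assms(2) by (cases i) (simp_all add: lessThan_Suc_atMost)
  finally show ?thesis .
qed

lemma e_series_in_Fil_WL: "e_series i \<in> Fil_WL i i"
proof -
  have "poly_weight 1 (u_power 0)"
    unfolding poly_weight_def u_power_def by (intro conjI exI[of _ "[:1:]"]) auto
  then have "list_all2 poly_weight (replicate i 1) (replicate i (u_power 0))"
    by (simp add: list_all2_conv_all_nth)
  from nested_series_poly_weights_in_Fil_WL[OF this] show ?thesis
    unfolding e_series_def by (simp add: map_replicate sum_list_replicate)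
qed

lemma nested_series_u_powers_in_Fil_WL:
  "nested_series (map lambert (map u_power es)) \<in> Fil_WL (sum_list es + length es) (length es)"
proof -
  have "nested_series (map lambert (map u_power es)) = bbsum (length es) (\<lambda>us vs. \<Prod>j<length es. of_nat (us ! j) ^ (es ! j))"
    unfolding nested_series_lambert by (simp add: u_power_def)
  also have "\<dots> \<in> Fil_WL ((\<Sum>j<length es. es ! j) + length es) (length es)"
    by (rule bbsum_u_monomial_in_Fil_WL)
  finally show ?thesis by (simp add: sum_list_sum_nth atLeast0LessThan)
qed

lemma mixed_series_1_in_Fil_WL: "1 \<le> j \<Longrightarrow> mixed_series a (j - 1) 1 \<in> Fil_WL (a + j) j"
  unfolding mixed_series_def
proof (rule Fil_WL_sum)
  fix x assume "1 \<le> j" "x \<in> {..j - 1}"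
  define es where "es = replicate x 0 @ a # replicate (j - 1 - x) 0"
  have "lambert (u_power_binom a 1) = lambert (u_power a)"
    by (rule lambert_cong) (simp add: u_power_binom_def u_power_def)
  then have "replicate x (lambert (u_power 0)) @ lambert (u_power_binom a 1) # replicate (j - 1 - x) (lambert (u_power 0))
      = map lambert (map u_power es)"
    unfolding es_def by (simp add: map_replicate)
  moreover have "sum_list es = a" "length es = j" unfolding es_def using \<open>1 \<le> j\<close> \<open>x \<in> {..j - 1}\<close> by auto
  ultimately show "nested_series (replicate x (lambert (u_power 0)) @ lambert (u_power_binom a 1)
      # replicate (j - 1 - x) (lambert (u_power 0))) \<in> Fil_WL (a + j) j"
    using nested_series_u_powers_in_Fil_WL[of es] by simp
qed

text \<open>Solving \<open>e\<^sub>i p\<^sub>a\<^sub>,\<^sub>k = M\<^sub>a\<^sub>,\<^sub>i\<^sub>,\<^sub>k + M\<^sub>a\<^sub>,\<^sub>i\<^sub>-\<^sub>1\<^sub>,\<^sub>k\<^sub>+\<^sub>1\<close> for the last term, with \<open>i + k = j\<close> fixed, moves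
  from \<open>M\<^sub>a\<^sub>,\<^sub>j\<^sub>-\<^sub>1\<^sub>,\<^sub>1\<close> to \<open>M\<^sub>a\<^sub>,\<^sub>0\<^sub>,\<^sub>j = p\<^sub>a\<^sub>,\<^sub>j\<close>.\<close>
lemma mixed_series_in_Fil_WL:
  assumes p: "\<And>k. 1 \<le> k \<Longrightarrow> k < j \<Longrightarrow> p_series a k \<in> Fil_WL (a + k) k" and "l < j"
  shows "mixed_series a (j - 1 - l) (Suc l) \<in> Fil_WL (a + j) j"
  using \<open>l < j\<close>
proof (induction l)
  case 0 then show ?case using mixed_series_1_in_Fil_WL[of j a] by simp
next
  case (Suc l)
  define i where "i = j - 1 - l"
  have i: "1 \<le> i" "i + Suc l = j" "i - 1 = j - 1 - Suc l" using Suc.prems unfolding i_def by auto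
  have "p_series a (Suc l) \<in> Fil_WL (a + Suc l) (Suc l)" by (rule p) (use Suc.prems in auto)
  from Fil_WL_mult[OF e_series_in_Fil_WL this]
  have "e_series i * p_series a (Suc l) \<in> Fil_WL (i + (a + Suc l)) (i + Suc l)" .
  moreover have "i + (a + Suc l) = a + j" using i(2) by simp
  ultimately have "e_series i * p_series a (Suc l) \<in> Fil_WL (a + j) j"
    by (simp only: i(2))
  moreover have "mixed_series a i (Suc l) \<in> Fil_WL (a + j) j"
    using Suc unfolding i_def by simp
  ultimately have "e_series i * p_series a (Suc l) - mixed_series a i (Suc l) \<in> Fil_WL (a + j) j"
    by (rule Fil_WL_diff)
  then show ?case
    using e_series_mult_p_series[of "Suc l" i a] i by simp
qed

lemma p_series_in_Fil_WL: "1 \<le> j \<Longrightarrow> p_series a j \<in> Fil_WL (a + j) j"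
proof (induction j rule: less_induct)
  case (less j)
  have "mixed_series a (j - 1 - (j - 1)) (Suc (j - 1)) \<in> Fil_WL (a + j) j"
    using mixed_series_in_Fil_WL[of j a "j - 1"] less by simp
  moreover have "mixed_series a 0 j = p_series a j"
    unfolding mixed_series_def p_series_def by simp
  ultimately show ?case using less.prems by simp
qed

section \<open>Bi-brackets of length one\<close>

lemma Suc_times_binomial_split:
  "(of_nat n + 1 :: 'a::comm_semiring_1) * of_nat (n choose k)
     = of_nat (Suc k) * of_nat (n choose Suc k) + of_nat (Suc k) * of_nat (n choose k)"
proof -
  have "Suc n * (n choose k) = Suc k * (n choose Suc k) + Suc k * (n choose k)"
    using Suc_times_binomial_eq[of n k] by (simp add: algebra_simps)
  then show ?thesis by (metis of_nat_Suc of_nat_add of_nat_mult add.commute)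
qed

lemma Suc_power_binomial_expansion:
  "\<exists>\<alpha>. \<forall>n. (of_nat n + 1 :: 'a::comm_semiring_1) ^ r = (\<Sum>k\<le>r. \<alpha> k * of_nat (n choose k))"
proof (induction r)
  case 0 then show ?case by (intro exI[of _ "\<lambda>_. 1"]) simp
next
  case (Suc r)
  then obtain \<alpha> where \<alpha>: "\<And>n. (of_nat n + 1 :: 'a) ^ r = (\<Sum>k\<le>r. \<alpha> k * of_nat (n choose k))" by blast
  define \<beta> where "\<beta> k = \<alpha> k * of_nat (Suc k)" for k
  have "(of_nat n + 1 :: 'a) ^ Suc r = (\<Sum>k\<le>r. \<alpha> k * ((of_nat n + 1) * of_nat (n choose k)))" for n
    by (simp only: power_Suc \<alpha> sum_distrib_left mult.left_commute)
  also have "\<dots> n = (\<Sum>k\<le>r. \<beta> k * of_nat (n choose Suc k)) + (\<Sum>k\<le>r. \<beta> k * of_nat (n choose k))" for n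
    by (simp only: Suc_times_binomial_split distrib_left mult.assoc \<beta>_def sum.distrib)
  also have "\<dots> n = (\<Sum>k\<le>Suc r. ((if k = 0 then 0 else \<beta> (k - 1)) + (if k \<le> r then \<beta> k else 0)) * of_nat (n choose k))" for n
  proof -
    have "(\<Sum>k\<le>r. \<beta> k * of_nat (n choose Suc k)) = (\<Sum>k\<le>Suc r. (if k = 0 then 0 else \<beta> (k - 1)) * of_nat (n choose k))"
      by (subst sum.atMost_Suc_shift) simp
    moreover have "(\<Sum>k\<le>r. \<beta> k * of_nat (n choose k)) = (\<Sum>k\<le>Suc r. (if k \<le> r then \<beta> k else 0) * of_nat (n choose k))"
      by simp
    ultimately show ?thesis by (simp only: distrib_right sum.distrib)
  qed
  finally show ?case
    by (intro exI[of _ "\<lambda>k. (if k = 0 then 0 else \<beta> (k - 1)) + (if k \<le> r then \<beta> k else 0)"] allI)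
qed

text \<open>In length one the conjugation just exchanges \<open>u\<close> and \<open>v\<close>.\<close>
lemma bibracket_length_one:
  "bibracket [s] [r] = bbsum 1 (\<lambda>us vs. of_nat (us ! 0) ^ (s - 1) / fact (s - 1) * (of_nat (vs ! 0) ^ r / fact r))"
proof -
  have "bibracket [s] [r] = bbsum 1 (\<lambda>us vs. of_nat (us ! 0) ^ r / fact r * (of_nat (vs ! 0) ^ (s - 1) / fact (s - 1)))"
    unfolding bibracket_eq_bbsum by simp
  also have "\<dots> = bbsum 1 (\<lambda>us vs. of_nat (rev (partial_sums 0 vs) ! 0) ^ r / fact r
      * (of_nat (rev (consecutive_diffs us) ! 0) ^ (s - 1) / fact (s - 1)))"
    by (rule bbsum_conjugate)
  also have "\<dots> = bbsum 1 (\<lambda>us vs. of_nat (us ! 0) ^ (s - 1) / fact (s - 1) * (of_nat (vs ! 0) ^ r / fact r))"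
  proof (rule bbsum_cong)
    fix us vs n assume "(us, vs) \<in> bb_index 1 n"
    then obtain u v where "us = [u]" "vs = [v]" unfolding bb_index_def by (auto simp: length_Suc_conv)
    then show "of_nat (rev (partial_sums 0 vs) ! 0) ^ r / fact r * (of_nat (rev (consecutive_diffs us) ! 0) ^ (s - 1) / fact (s - 1))
        = of_nat (us ! 0) ^ (s - 1) / fact (s - 1) * (of_nat (vs ! 0) ^ r / fact r :: rat)"
      by (simp add: mult.commute)
  qed
  finally show ?thesis .
qed

lemma p_series_eq_bbsum: "p_series a k = bbsum 1 (\<lambda>us vs. u_power_binom a k (us ! 0) (vs ! 0))"
  unfolding p_series_def using nested_series_lambert[of "[u_power_binom a k]"] by simp

lemma bibracket_length_one_in_Fil_WL: "1 \<le> s \<Longrightarrow> bibracket [s] [r] \<in> Fil_WL (s + r) (r + 1)"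
proof -
  assume "1 \<le> s"
  obtain \<alpha> :: "nat \<Rightarrow> rat" where \<alpha>: "\<And>n. (of_nat n + 1) ^ r = (\<Sum>k\<le>r. \<alpha> k * of_nat (n choose k))"
    using Suc_power_binomial_expansion[of r] by blast
  define c where "c k = \<alpha> k / (fact (s - 1) * fact r)" for k
  have "bibracket [s] [r] = bbsum 1 (\<lambda>us vs. \<Sum>k\<le>r. c k * u_power_binom (s - 1) (Suc k) (us ! 0) (vs ! 0))"
    unfolding bibracket_length_one
  proof (rule bbsum_cong)
    fix us vs n assume "(us, vs) \<in> bb_index 1 n"
    then have "0 < vs ! 0" unfolding bb_index_def by auto
    then have "(of_nat (vs ! 0) :: rat) ^ r = (\<Sum>k\<le>r. \<alpha> k * of_nat ((vs ! 0 - 1) choose k))"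
      using \<alpha>[of "vs ! 0 - 1"] by (simp add: of_nat_diff)
    then have "of_nat (us ! 0) ^ (s - 1) / fact (s - 1) * (of_nat (vs ! 0) ^ r / fact r)
        = of_nat (us ! 0) ^ (s - 1) / (fact (s - 1) * fact r) * (\<Sum>k\<le>r. \<alpha> k * of_nat ((vs ! 0 - 1) choose k))"
      by simp
    also have "\<dots> = (\<Sum>k\<le>r. c k * u_power_binom (s - 1) (Suc k) (us ! 0) (vs ! 0))"
      unfolding sum_distrib_left c_def u_power_binom_def by (intro sum.cong refl) (simp add: field_simps)
    finally show "of_nat (us ! 0) ^ (s - 1) / fact (s - 1) * (of_nat (vs ! 0) ^ r / fact r)
        = (\<Sum>k\<le>r. c k * u_power_binom (s - 1) (Suc k) (us ! 0) (vs ! 0))" .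
  qed
  also have "\<dots> = (\<Sum>k\<le>r. fps_const (c k) * p_series (s - 1) (Suc k))"
    by (simp add: bbsum_sum bbsum_smult p_series_eq_bbsum)
  also have "\<dots> \<in> Fil_WL (s + r) (r + 1)"
  proof (intro Fil_WL_sum Fil_WL_smult)
    fix k assume "k \<in> {..r}"
    then show "p_series (s - 1) (Suc k) \<in> Fil_WL (s + r) (r + 1)"
      by (intro Fil_WL_mono[OF p_series_in_Fil_WL[of "Suc k" "s - 1"]]) (use \<open>1 \<le> s\<close> in auto)
  qed
  finally show ?thesis .
qed

theorem proposition4p4:
  shows "(\<forall>s r :: nat. 1 \<le> s \<longrightarrow> bibracket [s] [r] \<in> MD) \<and>
         (\<forall>k d s r :: nat. 1 \<le> k \<longrightarrow> 1 \<le> d \<longrightarrow> 1 \<le> s \<longrightarrow> s \<le> k \<longrightarrow> r \<le> d \<longrightarrow>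
            bibracket [s] [r] \<in> Fil_WL (k + d) (d + 1)
          \<and> bibracket [s] [r] \<in> span_one_brackets
              {ts. ts \<noteq> [] \<and> (\<forall>t\<in>set ts. 1 \<le> t) \<and> length ts \<le> d + 1 \<and>
                   length ts \<le> k + d \<and> sum_list ts \<le> k + d})"
proof (intro conjI allI impI)
  fix s r :: nat assume "1 \<le> s"
  have "Fil_WL (s + r) (r + 1) \<subseteq> MD"
    unfolding Fil_WL_def MD_def by (rule span_one_brackets_mono) auto
  then show "bibracket [s] [r] \<in> MD" using bibracket_length_one_in_Fil_WL[OF \<open>1 \<le> s\<close>] by blast
next
  fix k d s r :: nat assume "1 \<le> k" "1 \<le> d" "1 \<le> s" "s \<le> k" "r \<le> d"
  then show Fil: "bibracket [s] [r] \<in> Fil_WL (k + d) (d + 1)"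
    by (intro Fil_WL_mono[OF bibracket_length_one_in_Fil_WL]) simp_all
  text \<open>Because \<open>1 \<le> k\<close>, the length bound \<open>d + 1\<close> already implies \<open>length ts \<le> k + d\<close>.\<close>
  have "{ts. ts \<noteq> [] \<and> (\<forall>t\<in>set ts. 1 \<le> t) \<and> length ts \<le> d + 1 \<and> sum_list ts \<le> k + d} =
        {ts. ts \<noteq> [] \<and> (\<forall>t\<in>set ts. 1 \<le> t) \<and> length ts \<le> d + 1 \<and> length ts \<le> k + d \<and> sum_list ts \<le> k + d}"
    using \<open>1 \<le> k\<close> by auto
  with Fil show "bibracket [s] [r] \<in> span_one_brackets
      {ts. ts \<noteq> [] \<and> (\<forall>t\<in>set ts. 1 \<le> t) \<and> length ts \<le> d + 1 \<and> length ts \<le> k + d \<and> sum_list ts \<le> k + d}"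
    unfolding Fil_WL_def by simp
qed
end
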